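(* Let $\mathcal{B}=(Q,\Sigma,\delta,q_0,F)$ be a Büchi automaton, let $\mathcal{S}=(X,\xrightarrow{\Sigma},\le)$ be a very-WSTS, and let $x_0\in X$. There exists $w\in L(\mathcal{B})\cap\mathrm{Traces}^\omega(\mathcal{S},x_0)$ if and only if there exists $q_f\in F$ such that $(q_f,\bot)$ is repeatedly coverable from $(q_0,x_0)$ in $\mathcal{B}\times\mathcal{S}_\bot$.
   Context: A (labeled, ordered) transition system is $\mathcal{S}=(X,\xrightarrow{\Sigma},\le)$: $X$ a set, $\Sigma$ a finite alphabet, $\xrightarrow{a}\subseteq X\times X$, $\le$ a quasi-ordering; relations extend to words. $\mathrm{Traces}^\omega(\mathcal{S},x)=\{a_1a_2\cdots\in\Sigma^\omega: x\xrightarrow{a_1}x_1\xrightarrow{a_2}x_2\cdots \text{ for some } x_1,x_2,\ldots\}$. A state $y$ is repeatedly coverable from $x$ if there are $z_0,z_1,\dots$ with $x\xrightarrow{*}z_0\xrightarrow{+}z_1\xrightarrow{+}\cdots$ and $z_i\ge y$ for all $i$. Very-WSTS: $\le$ is a wqo; $\mathcal{S}$ has strong monotonicity ($x\xrightarrow{a}y$, $x'\ge x$ imply $x'\xrightarrow{a}y'$ for some $y'\ge y$); its completion $\widehat{\mathcal{S}}=(\mathrm{Idl}(X),\Rightarrow_\Sigma,\subseteq)$ — where $\mathrm{Idl}(X)$ is the set of nonempty downward-closed directed subsets and $I\xRightarrow{a}J$ iff $J$ is a $\subseteq$-maximal ideal included in $\downarrow\{y:\exists x\in I,\ x\xrightarrow{a}y\}$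 — is deterministic, has $\subseteq$ as a wqo, is monotone, and has strong-strict monotonicity (strong monotonicity plus: $I\xRightarrow{a}J$, $I'\supset I$ imply $I'\xRightarrow{a}J'$ for some $J'\supset J$); and $\mathrm{Idl}(X)$ has finitely many levels, where $\mathrm{Idl}_0(X)=\mathrm{Idl}(X)$, $\mathrm{Idl}_n(X)$ is the set of unions of strictly increasing sequences in $\mathrm{Idl}_{n-1}(X)$, and finitely many levels means some $\mathrm{Idl}_n(X)=\emptyset$. A Büchi automaton $\mathcal{B}=(Q,\Sigma,\delta,q_0,F)$ accepts the infinite words having a run from $q_0$ visiting $F$ infinitely often; $L(\mathcal{B})$ is its language. $\mathcal{S}_\bot=(X\cup\{\bot\},\xrightarrow{\Sigma},\le_\bot)$ adds a new state $\bot$ with no transitions, below every state: $\le_\bot=\le\cup\{(\bot,y):y\in X\cup\{\bot\}\}$. The product $\mathcal{B}\times\mathcal{T}$ of $\mathcal{B}$ with a transition system $\mathcal{T}=(Y,\xrightarrow{\Sigma},\le)$ has states $Q\times Y$, alphabet $\Sigma\times Q$, ordering $(p,x)\le(q,y)$ iff $p=q$ and $x\le y$, and transitions $(p,x)\xrightarrow{(a,r)}(q,y)$ iff $(p,a,r)\in\delta$, $q=r$ and $x\xrightarrow{a}y$. *)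

theory Defs
  imports Main
begin

text \<open>A labeled transition system is given by a relation
  trans :: 'a => 's => 's => bool (trans a x y means x --a--> y) and a quasi-ordering le.
  The state set X is the carrier set C (for S it is the whole type).\<close>

definition step_rel :: "('a \<Rightarrow> 's \<Rightarrow> 's \<Rightarrow> bool) \<Rightarrow> 's \<Rightarrow> 's \<Rightarrow> bool" where
  "step_rel T x y \<longleftrightarrow> (\<exists>a. T a x y)"

definition traces_omega :: "('a \<Rightarrow> 's \<Rightarrow> 's \<Rightarrow> bool) \<Rightarrow> 's \<Rightarrow> (nat \<Rightarrow> 'a) set" where
  "traces_omega T x = {w. \<exists>xs. xs 0 = x \<and> (\<forall>i. T (w i) (xs i) (xs (Suc i)))}"

definition repeatedly_coverable ::
  "('a \<Rightarrow> 's \<Rightarrow> 's \<Rightarrow> bool) \<Rightarrow> ('s \<Rightarrow> 's \<Rightarrow> bool) \<Rightarrow> 's \<Rightarrow> 's \<Rightarrow> bool" where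
  "repeatedly_coverable T le x y \<longleftrightarrow>
     (\<exists>z :: nat \<Rightarrow> 's. (step_rel T)\<^sup>*\<^sup>* x (z 0)
        \<and> (\<forall>i. (step_rel T)\<^sup>+\<^sup>+ (z i) (z (Suc i)))
        \<and> (\<forall>i. le y (z i)))"

definition quasi_order_on :: "'s set \<Rightarrow> ('s \<Rightarrow> 's \<Rightarrow> bool) \<Rightarrow> bool" where
  "quasi_order_on C le \<longleftrightarrow> (\<forall>x\<in>C. le x x) \<and>
     (\<forall>x\<in>C. \<forall>y\<in>C. \<forall>z\<in>C. le x y \<longrightarrow> le y z \<longrightarrow> le x z)"

definition wqo_on :: "'s set \<Rightarrow> ('s \<Rightarrow> 's \<Rightarrow> bool) \<Rightarrow> bool" where
  "wqo_on C le \<longleftrightarrow> quasi_order_on C le \<and>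
     (\<forall>f :: nat \<Rightarrow> 's. (\<forall>i. f i \<in> C) \<longrightarrow> (\<exists>i j. i < j \<and> le (f i) (f j)))"

definition strongly_monotone_on ::
  "'s set \<Rightarrow> ('a \<Rightarrow> 's \<Rightarrow> 's \<Rightarrow> bool) \<Rightarrow> ('s \<Rightarrow> 's \<Rightarrow> bool) \<Rightarrow> bool" where
  "strongly_monotone_on C T le \<longleftrightarrow>
     (\<forall>a. \<forall>x\<in>C. \<forall>y\<in>C. \<forall>x'\<in>C. T a x y \<and> le x x' \<longrightarrow> (\<exists>y'\<in>C. T a x' y' \<and> le y y'))"

definition down_closure :: "('s \<Rightarrow> 's \<Rightarrow> bool) \<Rightarrow> 's set \<Rightarrow> 's set" where
  "down_closure le S = {y. \<exists>z\<in>S. le y z}"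

definition is_ideal :: "('s \<Rightarrow> 's \<Rightarrow> bool) \<Rightarrow> 's set \<Rightarrow> bool" where
  "is_ideal le I \<longleftrightarrow> I \<noteq> {}
     \<and> (\<forall>x y. y \<in> I \<longrightarrow> le x y \<longrightarrow> x \<in> I)
     \<and> (\<forall>x\<in>I. \<forall>y\<in>I. \<exists>z\<in>I. le x z \<and> le y z)"

definition Idl :: "('s \<Rightarrow> 's \<Rightarrow> bool) \<Rightarrow> 's set set" where
  "Idl le = {I. is_ideal le I}"

definition post :: "('a \<Rightarrow> 's \<Rightarrow> 's \<Rightarrow> bool) \<Rightarrow> 'a \<Rightarrow> 's set \<Rightarrow> 's set" where
  "post T a I = {y. \<exists>x\<in>I. T a x y}"

definition comp_trans ::
  "('a \<Rightarrow> 's \<Rightarrow> 's \<Rightarrow> bool) \<Rightarrow> ('s \<Rightarrow> 's \<Rightarrow> bool) \<Rightarrow> 'a \<Rightarrow> 's set \<Rightarrow> 's set \<Rightarrow> bool" where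
  "comp_trans T le a I J \<longleftrightarrow> I \<in> Idl le \<and> J \<in> Idl le
     \<and> J \<subseteq> down_closure le (post T a I)
     \<and> (\<forall>J'\<in>Idl le. J \<subseteq> J' \<and> J' \<subseteq> down_closure le (post T a I) \<longrightarrow> J' = J)"

fun idl_level :: "('s \<Rightarrow> 's \<Rightarrow> bool) \<Rightarrow> nat \<Rightarrow> 's set set" where
  "idl_level le 0 = Idl le"
| "idl_level le (Suc n) =
     {\<Union>(range f) | f. (\<forall>i. f i \<in> idl_level le n) \<and> (\<forall>i. f i \<subset> f (Suc i))}"

definition finitely_many_levels :: "('s \<Rightarrow> 's \<Rightarrow> bool) \<Rightarrow> bool" where
  "finitely_many_levels le \<longleftrightarrow> (\<exists>n. idl_level le n = {})"

definition very_wsts :: "('a::finite \<Rightarrow> 's \<Rightarrow> 's \<Rightarrow> bool) \<Rightarrow> ('s \<Rightarrow> 's \<Rightarrow> bool) \<Rightarrow> bool" where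
  "very_wsts T le \<longleftrightarrow>
     wqo_on UNIV le
   \<and> strongly_monotone_on UNIV T le
   \<comment> \<open>completion is deterministic\<close>
   \<and> (\<forall>a. \<forall>I\<in>Idl le. \<forall>J J'. comp_trans T le a I J \<and> comp_trans T le a I J' \<longrightarrow> J = J')
   \<comment> \<open>inclusion is a wqo on ideals\<close>
   \<and> wqo_on (Idl le) (\<subseteq>)
   \<comment> \<open>completion is (strongly) monotone\<close>
   \<and> strongly_monotone_on (Idl le) (comp_trans T le) (\<subseteq>)
   \<comment> \<open>strict part of strong-strict monotonicity\<close>
   \<and> (\<forall>a. \<forall>I\<in>Idl le. \<forall>J\<in>Idl le. \<forall>I'\<in>Idl le.
        comp_trans T le a I J \<and> I \<subset> I' \<longrightarrow> (\<exists>J'\<in>Idl le. comp_trans T le a I' J' \<and> J \<subset> J'))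
   \<and> finitely_many_levels le"

definition buchi_lang :: "('q \<times> 'a \<times> 'q) set \<Rightarrow> 'q \<Rightarrow> 'q set \<Rightarrow> (nat \<Rightarrow> 'a) set" where
  "buchi_lang \<delta> q0 F = {w. \<exists>r :: nat \<Rightarrow> 'q. r 0 = q0 \<and> (\<forall>i. (r i, w i, r (Suc i)) \<in> \<delta>)
      \<and> (\<exists>\<^sub>\<infinity>i. r i \<in> F)}"

text \<open>S_bot: the new state bot is None; Some x are the old states.\<close>
fun bot_trans :: "('a \<Rightarrow> 's \<Rightarrow> 's \<Rightarrow> bool) \<Rightarrow> 'a \<Rightarrow> 's option \<Rightarrow> 's option \<Rightarrow> bool" where
  "bot_trans T a (Some x) (Some y) = T a x y"
| "bot_trans T a _ _ = False"

fun bot_le :: "('s \<Rightarrow> 's \<Rightarrow> bool) \<Rightarrow> 's option \<Rightarrow> 's option \<Rightarrow> bool" where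
  "bot_le le None _ = True"
| "bot_le le (Some x) None = False"
| "bot_le le (Some x) (Some y) = le x y"

fun prod_trans :: "('q \<times> 'a \<times> 'q) set \<Rightarrow> ('a \<Rightarrow> 's \<Rightarrow> 's \<Rightarrow> bool)
    \<Rightarrow> ('a \<times> 'q) \<Rightarrow> ('q \<times> 's) \<Rightarrow> ('q \<times> 's) \<Rightarrow> bool" where
  "prod_trans \<delta> T (a, r) (p, x) (q, y) \<longleftrightarrow> (p, a, r) \<in> \<delta> \<and> q = r \<and> T a x y"

fun prod_le :: "('s \<Rightarrow> 's \<Rightarrow> bool) \<Rightarrow> ('q \<times> 's) \<Rightarrow> ('q \<times> 's) \<Rightarrow> bool" where
  "prod_le le (p, x) (q, y) \<longleftrightarrow> p = q \<and> le x y"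

end

theory Submission
  imports Defs "HOL-Library.Infinite_Set"
begin

text \<open>The state \<open>\<bottom>\<close> lies below every state of \<open>S\<^sub>\<bottom>\<close> and has no transitions, so a
  reachable product state covers \<open>(q\<^sub>f, \<bottom>)\<close> exactly when its automaton component is \<open>q\<^sub>f\<close>.
  Repeated coverability of \<open>(q\<^sub>f, \<bottom>)\<close> thus means that some infinite run of \<open>B \<times> S\<close> visits
  \<open>q\<^sub>f\<close> infinitely often, once the finite segments between consecutive covering states are
  stitched into one run; as \<open>F\<close> is finite, such runs for some \<open>q\<^sub>f \<in> F\<close> are exactly the
  accepting runs of \<open>B\<close> synchronised with runs of \<open>S\<close>.\<close>

definition recurrent_path :: "('s \<Rightarrow> 's \<Rightarrow> bool) \<Rightarrow> ('s \<Rightarrow> bool) \<Rightarrow> 's \<Rightarrow> bool" where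
  "recurrent_path R Q x \<longleftrightarrow>
     (\<exists>p. p 0 = x \<and> (\<forall>i. R (p i) (p (Suc i))) \<and> (\<exists>\<^sub>\<infinity>i. Q (p i)))"

lemma rtranclp_path:
  assumes "\<And>i. R (s i) (s (Suc i))" and "i \<le> j"
  shows "R\<^sup>*\<^sup>* (s i) (s j)"
  using assms(2)
proof (induction j rule: dec_induct)
  case (step j)
  then show ?case using assms(1) by (meson rtranclp.rtrancl_into_rtrancl)
qed simp

lemma tranclp_path:
  assumes "\<And>i. R (s i) (s (Suc i))" and "i < j"
  shows "R\<^sup>+\<^sup>+ (s i) (s j)"
proof -
  obtain j' where j: "j = Suc j'" "i \<le> j'" using assms(2) by (cases j) auto
  then show ?thesis using rtranclp_path[of R s, OF assms(1) j(2)] assms(1)[of j']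
    by (simp add: rtranclp_into_tranclp1)
qed

lemma tranclp_chain_of_recurrent_path:
  assumes "recurrent_path R Q x"
  shows "\<exists>z. R\<^sup>*\<^sup>* x (z 0) \<and> (\<forall>i. R\<^sup>+\<^sup>+ (z i) (z (Suc i))) \<and> (\<forall>i. Q (z i))"
proof -
  obtain p where p: "p 0 = x" "\<And>i. R (p i) (p (Suc i))" "\<exists>\<^sub>\<infinity>i. Q (p i)"
    using assms unfolding recurrent_path_def by blast
  define S where "S = {i. Q (p i)}"
  have S: "infinite S" using p(3) unfolding S_def INFM_iff_infinite .
  have "R\<^sup>*\<^sup>* x (p (enumerate S 0))"
    using rtranclp_path[of R p, OF p(2), of 0] p(1) by simp
  moreover have "R\<^sup>+\<^sup>+ (p (enumerate S i)) (p (enumerate S (Suc i)))" for i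
    using tranclp_path[of R p, OF p(2)] enumerate_step[OF S] by blast
  moreover have "Q (p (enumerate S i))" for i
    using enumerate_in_set[OF S] unfolding S_def by simp
  ultimately show ?thesis by (intro exI[of _ "\<lambda>i. p (enumerate S i)"]) blast
qed

lemma recurrent_path_of_ranking:
  fixes d :: "'s \<Rightarrow> nat"
  assumes step: "\<And>t. t \<in> G \<Longrightarrow> \<exists>t'. R t t' \<and> t' \<in> G \<and> (0 < d t \<longrightarrow> d t' < d t)"
    and "x \<in> G"
  shows "recurrent_path R (\<lambda>t. t \<in> G \<and> d t = 0) x"
proof -
  obtain nx where nx: "\<And>t. t \<in> G \<Longrightarrow> R t (nx t) \<and> nx t \<in> G \<and> (0 < d t \<longrightarrow> d (nx t) < d t)"
    using step by metis
  define p where "p i = (nx ^^ i) x" for i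
  have pG: "p i \<in> G" for i
    by (induction i) (simp_all add: p_def \<open>x \<in> G\<close> nx)
  have p_Suc: "p (Suc i) = nx (p i)" for i
    by (simp add: p_def)
  have "\<exists>j\<ge>i. d (p j) = 0" for i
  proof (induction "d (p i)" arbitrary: i rule: less_induct)
    case less
    show ?case
    proof (cases "d (p i) = 0")
      case False
      then have "d (p (Suc i)) < d (p i)" using nx[OF pG[of i]] p_Suc by simp
      then show ?thesis using less by (metis Suc_leD)
    qed auto
  qed
  then have "\<exists>\<^sub>\<infinity>i. p i \<in> G \<and> d (p i) = 0" by (simp add: INFM_nat_le pG)
  moreover have "R (p i) (p (Suc i))" for i
    using nx[OF pG[of i]] p_Suc by simp
  ultimately show ?thesis unfolding recurrent_path_def p_def
    by (intro exI[of _ "\<lambda>i. (nx ^^ i) x"]) simp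
qed

text \<open>Stitching: rank a state by its distance to the next state of the chain.\<close>

lemma recurrent_path_of_tranclp_chain:
  assumes "R\<^sup>*\<^sup>* x (z 0)" and chain: "\<And>i. R\<^sup>+\<^sup>+ (z i) (z (Suc i))" and Q: "\<And>i. Q (z i)"
  shows "recurrent_path R Q x"
proof -
  define G where "G = {t. \<exists>n k. (R ^^ n) t (z k)}"
  define d where "d t = (LEAST n. \<exists>k. (R ^^ n) t (z k))" for t
  have d: "\<exists>k. (R ^^ d t) t (z k)" if "t \<in> G" for t
  proof -
    have "\<exists>n k. (R ^^ n) t (z k)" using that unfolding G_def by simp
    from LeastI_ex[OF this] show ?thesis unfolding d_def .
  qed
  have "\<exists>t'. R t t' \<and> t' \<in> G \<and> (0 < d t \<longrightarrow> d t' < d t)" if t: "t \<in> G" for t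
  proof (cases "d t")
    case 0
    then obtain k where "t = z k" using d[OF t] by auto
    then obtain t' where t': "R t t'" "R\<^sup>*\<^sup>* t' (z (Suc k))"
      using chain[of k] by (meson tranclpD)
    then obtain m where "(R ^^ m) t' (z (Suc k))" by (blast dest: rtranclp_imp_relpowp)
    then show ?thesis using t'(1) 0 unfolding G_def by auto
  next
    case (Suc n)
    obtain k where "(R ^^ Suc n) t (z k)" using d[OF t] Suc by auto
    then obtain t' where t': "R t t'" "(R ^^ n) t' (z k)" by (blast dest: relpowp_Suc_D2)
    then have "d t' \<le> n" unfolding d_def by (blast intro: Least_le)
    then show ?thesis using t' Suc unfolding G_def by (auto intro!: exI[of _ t'])
  qed
  moreover have "x \<in> G" using assms(1) unfolding G_def by (blast dest: rtranclp_imp_relpowp)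
  ultimately have "recurrent_path R (\<lambda>t. t \<in> G \<and> d t = 0) x"
    by (rule recurrent_path_of_ranking)
  moreover have "Q t" if "t \<in> G \<and> d t = 0" for t
    using d[of t] that Q by auto
  ultimately show ?thesis
    unfolding recurrent_path_def by (blast intro: INFM_mono)
qed

lemma recurrent_path_iff_tranclp_chain:
  "recurrent_path R Q x \<longleftrightarrow>
     (\<exists>z. R\<^sup>*\<^sup>* x (z 0) \<and> (\<forall>i. R\<^sup>+\<^sup>+ (z i) (z (Suc i))) \<and> (\<forall>i. Q (z i)))"
  using tranclp_chain_of_recurrent_path recurrent_path_of_tranclp_chain by metis

lemma recurrent_path_mem_finite_iff:
  assumes "finite A"
  shows "recurrent_path R (\<lambda>s. f s \<in> A) x \<longleftrightarrow> (\<exists>a\<in>A. recurrent_path R (\<lambda>s. f s = a) x)"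
proof -
  have "(\<exists>\<^sub>\<infinity>i. f (p i) \<in> A) \<longleftrightarrow> (\<exists>a\<in>A. \<exists>\<^sub>\<infinity>i. f (p i) = a)" for p :: "nat \<Rightarrow> _"
    using INFM_finite_Bex_distrib[OF assms, of "\<lambda>a i. f (p i) = a"] by simp
  then show ?thesis unfolding recurrent_path_def by blast
qed

lemma prod_bot_le_None_iff: "prod_le (bot_le le) (q, None) s \<longleftrightarrow> fst s = q"
  by (cases s) auto

lemma step_rel_prod_bot_trans:
  "step_rel (prod_trans \<delta> (bot_trans T)) s s' \<longleftrightarrow>
   (\<exists>a x x'. snd s = Some x \<and> snd s' = Some x' \<and> (fst s, a, fst s') \<in> \<delta> \<and> T a x x')"
proof -
  obtain p y q y' where "s = (p, y)" "s' = (q, y')" by (cases s, cases s')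
  then show ?thesis unfolding step_rel_def by (cases y; cases y') auto
qed

lemma repeatedly_coverable_bot_iff:
  "repeatedly_coverable (prod_trans \<delta> (bot_trans T)) (prod_le (bot_le le)) x (q, None) \<longleftrightarrow>
   recurrent_path (step_rel (prod_trans \<delta> (bot_trans T))) (\<lambda>s. fst s = q) x"
  unfolding repeatedly_coverable_def recurrent_path_iff_tranclp_chain prod_bot_le_None_iff ..

lemma accepted_trace_iff_recurrent_product_path:
  "(\<exists>w. w \<in> buchi_lang \<delta> q0 F \<inter> traces_omega T x0) \<longleftrightarrow>
   recurrent_path (step_rel (prod_trans \<delta> (bot_trans T))) (\<lambda>s. fst s \<in> F) (q0, Some x0)"
    (is "?lhs \<longleftrightarrow> recurrent_path ?R _ _")
proof
  assume ?lhs
  then obtain w r xs where r: "r 0 = q0" "\<And>i. (r i, w i, r (Suc i)) \<in> \<delta>" "\<exists>\<^sub>\<infinity>i. r i \<in> F"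
    and xs: "xs 0 = x0" "\<And>i. T (w i) (xs i) (xs (Suc i))"
    unfolding buchi_lang_def traces_omega_def by blast
  have "?R (r i, Some (xs i)) (r (Suc i), Some (xs (Suc i)))" for i
    unfolding step_rel_prod_bot_trans using r(2) xs(2) by auto
  then show "recurrent_path ?R (\<lambda>s. fst s \<in> F) (q0, Some x0)"
    unfolding recurrent_path_def using r(1,3) xs(1)
    by (intro exI[of _ "\<lambda>i. (r i, Some (xs i))"]) auto
next
  assume "recurrent_path ?R (\<lambda>s. fst s \<in> F) (q0, Some x0)"
  then obtain p where p: "p 0 = (q0, Some x0)" "\<And>i. ?R (p i) (p (Suc i))" "\<exists>\<^sub>\<infinity>i. fst (p i) \<in> F"
    unfolding recurrent_path_def by blast
  obtain w where w: "\<And>i. \<exists>x x'. snd (p i) = Some x \<and> snd (p (Suc i)) = Some x'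
      \<and> (fst (p i), w i, fst (p (Suc i))) \<in> \<delta> \<and> T (w i) x x'"
    using p(2) unfolding step_rel_prod_bot_trans by metis
  have "w \<in> buchi_lang \<delta> q0 F"
    unfolding buchi_lang_def using p(1,3) w by (intro CollectI exI[of _ "\<lambda>i. fst (p i)"]) auto
  moreover have "w \<in> traces_omega T x0"
  proof (unfold traces_omega_def, intro CollectI exI[of _ "\<lambda>i. the (snd (p i))"] conjI allI)
    show "T (w i) (the (snd (p i))) (the (snd (p (Suc i))))" for i using w[of i] by auto
  qed (simp add: p(1))
  ultimately show ?lhs by blast
qed

theorem proposition19:
  fixes \<delta> :: "('q::finite \<times> 'a::finite \<times> 'q) set" and q0 :: 'q and F :: "'q set"
    and T :: "'a \<Rightarrow> 'x \<Rightarrow> 'x \<Rightarrow> bool" and le :: "'x \<Rightarrow> 'x \<Rightarrow> bool" and x0 :: 'x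
  assumes "very_wsts T le"
  shows "(\<exists>w. w \<in> buchi_lang \<delta> q0 F \<inter> traces_omega T x0) \<longleftrightarrow>
         (\<exists>qf\<in>F. repeatedly_coverable (prod_trans \<delta> (bot_trans T)) (prod_le (bot_le le))
                    (q0, Some x0) (qf, None))"
  unfolding accepted_trace_iff_recurrent_product_path repeatedly_coverable_bot_iff
  by (rule recurrent_path_mem_finite_iff) simp

end
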